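(* Let $M_1>0$, $M_2>0$. Let $F(z)=\bar{z}G(z)+H(z)$, $z\in\mathbb{D}$, where $G,H$ are analytic in $\mathbb{D}$, $G\not\equiv 0$, $G(0)=H(0)=0$, $G'(0)=H'(0)=1$, $|G(z)|\leq M_1$ and $|H(z)|\leq M_2$ for all $z\in\mathbb{D}$. Let $\rho_3$ be the unique root in $(0,1)$ of the equation $$1-\Big(M_2-\frac{1}{M_2}\Big)\frac{2r-r^2}{(1-r)^2}-\Big(M_1-\frac{1}{M_1}\Big)\frac{(3-2r)r^2}{(1-r)^2}-2r=0.$$ Then $F$ is sense-preserving, univalent and fully starlike in $\mathbb{D}_{\rho_3}$.
   Context: $\mathbb{D}=\{z:|z|<1\}$, $\mathbb{D}_r=\{z:|z|<r\}$. For a continuously differentiable $F$, $F_z=\frac12(F_x-iF_y)$, $F_{\bar z}=\frac12(F_x+iF_y)$, and the Jacobian is $J_F=|F_z|^2-|F_{\bar z}|^2$; $F$ is sense-preserving on a domain if $J_F>0$ there. $F$ is fully starlike in $\mathbb{D}_r$ if it is sense-preserving there, $F(0)=0$, $F(z)\neq 0$ for $z\in\mathbb{D}_r\setminus\{0\}$, and for each $s\in(0,r)$ the curve $t\mapsto F(se^{it})$ is starlike with respect to the origin, i.e. $\mathrm{Re}\big((zF_z(z)-\bar zF_{\bar z}(z))/F(z)\big)>0$ for all $|z|=s$. *)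

theory Defs
  imports "HOL-Analysis.Analysis"
begin

definition wirt_z :: "(complex \<Rightarrow> complex) \<Rightarrow> complex \<Rightarrow> complex" where
  "wirt_z F z = (frechet_derivative F (at z) 1 - \<i> * frechet_derivative F (at z) \<i>) / 2"

definition wirt_zbar :: "(complex \<Rightarrow> complex) \<Rightarrow> complex \<Rightarrow> complex" where
  "wirt_zbar F z = (frechet_derivative F (at z) 1 + \<i> * frechet_derivative F (at z) \<i>) / 2"

definition jacobian :: "(complex \<Rightarrow> complex) \<Rightarrow> complex \<Rightarrow> real" where
  "jacobian F z = (cmod (wirt_z F z))\<^sup>2 - (cmod (wirt_zbar F z))\<^sup>2"

definition sense_preserving_on :: "(complex \<Rightarrow> complex) \<Rightarrow> complex set \<Rightarrow> bool" where
  "sense_preserving_on F S \<longleftrightarrow> (\<forall>z\<in>S. F differentiable (at z) \<and> jacobian F z > 0)"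

definition fully_starlike_in :: "(complex \<Rightarrow> complex) \<Rightarrow> real \<Rightarrow> bool" where
  "fully_starlike_in F r \<longleftrightarrow>
     sense_preserving_on F (ball 0 r) \<and> F 0 = 0 \<and>
     (\<forall>z\<in>ball 0 r - {0}. F z \<noteq> 0) \<and>
     (\<forall>s\<in>{0<..<r}. \<forall>z. cmod z = s \<longrightarrow>
        Re ((z * wirt_z F z - cnj z * wirt_zbar F z) / F z) > 0)"

definition rho3_eq :: "real \<Rightarrow> real \<Rightarrow> real \<Rightarrow> real" where
  "rho3_eq M1 M2 r = 1 - (M2 - 1 / M2) * ((2 * r - r\<^sup>2) / (1 - r)\<^sup>2)
                       - (M1 - 1 / M1) * ((3 - 2 * r) * r\<^sup>2 / (1 - r)\<^sup>2) - 2 * r"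

end

theory Submission
  imports Defs "HOL-Complex_Analysis.Complex_Analysis"
begin

text \<open>
  Let f be holomorphic in the unit disc with f 0 = 0, f' 0 = 1 and |f| \<le> M. Averaging
  f (\<omega> z) / (\<omega> z) over the (n-1)-th roots of unity \<omega> gives a function bounded by M whose
  value and derivative at 0 are 1 and the n-th Taylor coefficient a_n, so the Schwarz-Pick
  inequality yields |a_n| \<le> M - 1/M for n \<ge> 2. Summing these bounds estimates the Wirtinger
  derivatives F_z = cnj z G' + H' and F_zbar = G of F = cnj z G + H: below the root rho3 they give
  |F_zbar| < Re F_z, hence a positive Jacobian and, because Re (cnj L * F) then increases strictly
  along every segment with direction L, univalence. The same bounds give |N - F| < |N + F| for
  N = z F_z - cnj z F_zbar, which is Re (N / F) > 0.
\<close>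

section \<open>Taylor coefficients of bounded holomorphic functions\<close>

definition taylor_coeff :: "(complex \<Rightarrow> complex) \<Rightarrow> nat \<Rightarrow> complex" where
  "taylor_coeff f n = (deriv ^^ n) f 0 / fact n"

lemma taylor_coeff_0 [simp]: "taylor_coeff f 0 = f 0"
  by (simp add: taylor_coeff_def)

lemma taylor_coeff_Suc_0 [simp]: "taylor_coeff f (Suc 0) = deriv f 0"
  by (simp add: taylor_coeff_def)

lemma sums_taylor_coeff:
  assumes "f holomorphic_on ball 0 1" and "norm z < 1"
  shows "(\<lambda>n. taylor_coeff f n * z ^ n) sums f z"
  using holomorphic_power_series[OF assms(1), of z] assms(2) by (simp add: taylor_coeff_def)

lemma upperbound_at_left_one:
  fixes \<phi> :: "real \<Rightarrow> real"
  assumes "continuous (at_left 1) \<phi>" and "\<And>s. 0 < s \<Longrightarrow> s < 1 \<Longrightarrow> \<phi> s \<le> C"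
  shows "\<phi> 1 \<le> C"
proof (rule tendsto_upperbound)
  show "(\<phi> \<longlongrightarrow> \<phi> 1) (at_left 1)"
    using assms(1) by (simp add: continuous_within)
  show "\<forall>\<^sub>F s in at_left 1. \<phi> s \<le> C"
  proof (rule eventually_mono)
    show "\<forall>\<^sub>F s in at_left 1. s \<in> {0<..<1::real}" by (rule eventually_at_left_real) simp
  qed (use assms(2) in auto)
qed simp

lemma norm_taylor_coeff_le:
  assumes holf: "f holomorphic_on ball 0 1" and bd: "\<forall>z\<in>ball 0 1. norm (f z) \<le> M"
  shows "norm (taylor_coeff f n) \<le> M"
proof -
  have "r ^ n * norm (taylor_coeff f n) \<le> M" if r: "0 < r" "r < 1" for r
  proof -
    have sub: "cball 0 r \<subseteq> ball (0::complex) 1" using r by auto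
    have "norm ((deriv ^^ n) f 0) \<le> fact n * M / r ^ n"
    proof (rule Cauchy_inequality)
      show "f holomorphic_on ball 0 r"
        using holomorphic_on_subset[OF holf] sub ball_subset_cball by blast
      show "continuous_on (cball 0 r) f"
        using holomorphic_on_imp_continuous_on[OF holf] continuous_on_subset sub by blast
      show "norm (f x) \<le> M" if "norm (0 - x) = r" for x
        using that bd r by auto
    qed fact
    then show ?thesis using r by (simp add: taylor_coeff_def norm_divide field_simps)
  qed
  then have "1 ^ n * norm (taylor_coeff f n) \<le> M"
    by (intro upperbound_at_left_one[where \<phi> = "\<lambda>r. r ^ n * norm (taylor_coeff f n)"] continuous_intros)
  then show ?thesis by simp
qed

lemma norm_scaled_less_one:
  fixes f :: "complex \<Rightarrow> complex"
  assumes "\<forall>z\<in>ball 0 1. norm (f z) \<le> M" and "M > 0" and "0 < s" "s < 1" and "norm w < 1"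
  shows "norm (of_real (s / M) * f w) < 1"
proof -
  have "s / M * norm (f w) \<le> s / M * M"
    using assms by (intro mult_left_mono) auto
  then have "norm (of_real (s / M) * f w) \<le> s"
    using assms by (simp add: norm_mult norm_divide)
  then show ?thesis using assms by simp
qed

lemma Schwarz_Lemma_bounded:
  assumes holf: "f holomorphic_on ball 0 1" and f0: "f 0 = 0"
    and bd: "\<forall>z\<in>ball 0 1. norm (f z) \<le> M" and z: "norm z < 1"
  shows "norm (f z) \<le> M * norm z"
proof -
  have "s * norm (f z) \<le> M * norm z" if s: "0 < s" "s < 1" for s
  proof (cases "M > 0")
    case True
    define g where "g = (\<lambda>w. of_real (s / M) * f w)"
    have "norm (g z) \<le> norm z"
    proof (rule Schwarz_Lemma(1))
      show "g holomorphic_on ball 0 1" unfolding g_def by (intro holomorphic_intros holf)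
      show "norm (g w) < 1" if "norm w < 1" for w
        unfolding g_def using norm_scaled_less_one[OF bd True s that] .
    qed (use f0 z in \<open>simp_all add: g_def\<close>)
    then show ?thesis using True s by (simp add: g_def norm_mult norm_divide field_simps)
  next
    case False
    have "0 \<le> M" using bd by (metis centre_in_ball norm_ge_zero order_trans zero_less_one)
    then have "M = 0" using False by simp
    then show ?thesis using bd z by auto
  qed
  then have "1 * norm (f z) \<le> M * norm z"
    by (intro upperbound_at_left_one[where \<phi> = "\<lambda>s. s * norm (f z)"] continuous_intros)
  then show ?thesis by simp
qed

lemma Schwarz_Pick_origin:
  assumes holg: "g holomorphic_on ball 0 1" and lt1: "\<And>w. norm w < 1 \<Longrightarrow> norm (g w) < 1"
  shows "norm (deriv g 0) \<le> 1 - (norm (g 0))\<^sup>2"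
proof -
  define c where "c = g 0"
  have c: "norm c < 1" using lt1[of 0] by (simp add: c_def)
  have cc: "cnj c * c = of_real ((norm c)\<^sup>2)"
    using complex_norm_square[of c] by (simp add: mult.commute)
  have c2: "(norm c)\<^sup>2 < 1" using c by (simp add: abs_square_less_1)
  define h where "h = Moebius_function 0 c \<circ> g"
  have gin: "g ` ball 0 1 \<subseteq> ball 0 1" using lt1 by auto
  have holh: "h holomorphic_on ball 0 1"
    unfolding h_def
    by (rule holomorphic_on_compose_gen[OF holg Moebius_function_holomorphic[OF c] gin])
  have "norm (deriv h 0) \<le> 1"
    by (rule Schwarz_Lemma(2)[OF holh, of 0])
      (auto simp: h_def c_def Moebius_function_eq_zero intro!: Moebius_function_norm_lt_1 c lt1)
  moreover have "norm (deriv h 0) = norm (deriv g 0) / (1 - (norm c)\<^sup>2)"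
  proof -
    have den: "1 - cnj c * c \<noteq> 0"
      using c2 unfolding cc by (metis less_irrefl of_real_1 of_real_diff of_real_eq_0_iff right_minus_eq)
    have "(g has_field_derivative deriv g 0) (at 0)"
      using holg by (intro holomorphic_derivI[of _ "ball 0 1"]) auto
    then have "(h has_field_derivative deriv g 0 / (1 - cnj c * c)) (at 0)"
      unfolding h_def o_def Moebius_function_simple using den
      by (auto intro!: derivative_eq_intros simp: c_def)
    then have "deriv h 0 = deriv g 0 / of_real (1 - (norm c)\<^sup>2)"
      unfolding cc by (simp add: DERIV_imp_deriv)
    then show ?thesis using c2 by (simp only: norm_divide norm_of_real)
  qed
  ultimately show ?thesis
    using c2 by (simp add: divide_le_eq c_def)
qed

lemma Schwarz_Pick_origin_bounded:
  assumes holf: "f holomorphic_on ball 0 1" and bd: "\<forall>w\<in>ball 0 1. norm (f w) \<le> M" and M: "M > 0"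
  shows "M * norm (deriv f 0) \<le> M\<^sup>2 - (norm (f 0))\<^sup>2"
proof -
  have "s * (M * norm (deriv f 0)) + s\<^sup>2 * (norm (f 0))\<^sup>2 \<le> M\<^sup>2" if s: "0 < s" "s < 1" for s
  proof -
    define g where "g = (\<lambda>w. of_real (s / M) * f w)"
    have "norm (deriv g 0) \<le> 1 - (norm (g 0))\<^sup>2"
    proof (rule Schwarz_Pick_origin)
      show "g holomorphic_on ball 0 1" unfolding g_def by (intro holomorphic_intros holf)
      show "norm (g w) < 1" if "norm w < 1" for w
        unfolding g_def using norm_scaled_less_one[OF bd M s that] .
    qed
    moreover have "deriv g 0 = of_real (s / M) * deriv f 0"
      unfolding g_def using holf
      by (intro deriv_cmult holomorphic_on_imp_differentiable_at[of _ "ball 0 1"]) auto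
    ultimately have "s / M * norm (deriv f 0) \<le> 1 - (s / M * norm (f 0))\<^sup>2"
      using s M by (simp add: g_def norm_mult norm_divide)
    then show ?thesis using M by (simp add: field_simps power2_eq_square)
  qed
  then have "1 * (M * norm (deriv f 0)) + 1\<^sup>2 * (norm (f 0))\<^sup>2 \<le> M\<^sup>2"
    by (intro upperbound_at_left_one[where \<phi> = "\<lambda>s. s * (M * norm (deriv f 0)) + s\<^sup>2 * (norm (f 0))\<^sup>2"]
        continuous_intros)
  then show ?thesis by simp
qed

lemma sum_powers_root_of_unity:
  assumes k: "k > 0"
  shows "(\<Sum>j<k. (exp (2 * of_real pi * \<i> / of_nat k) ^ n) ^ j) = (if k dvd n then of_nat k else 0)"
proof -
  have u: "exp (2 * of_real pi * \<i> / of_nat k) ^ n = exp (2 * of_real pi * \<i> * of_nat n / of_nat k)"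
    by (simp flip: exp_of_nat_mult add: field_simps)
  have "(exp (2 * of_real pi * \<i> * of_nat n / of_nat k) :: complex) ^ k = 1"
    by (rule complex_root_unity) (use k in simp)
  moreover have "exp (2 * of_real pi * \<i> * of_nat n / of_nat k) = 1 \<longleftrightarrow> k dvd n"
    by (rule complex_root_unity_eq_1) (use k in simp)
  ultimately show ?thesis
    unfolding u by (auto simp: sum_gp_strict)
qed

lemma sums_lacunary_taylor_average:
  assumes holf: "f holomorphic_on ball 0 1" and f0: "f 0 = 0" and k: "k > 0"
    and z: "norm z < 1" "z \<noteq> 0"
  defines "\<omega> \<equiv> exp (2 * of_real pi * \<i> / of_nat k)"
  shows "(\<lambda>m. taylor_coeff f (Suc (m * k)) * (z ^ k) ^ m)
           sums ((\<Sum>j<k. f (\<omega> ^ j * z) / (\<omega> ^ j * z)) / of_nat k)"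
proof -
  have norm_\<omega>: "norm \<omega> = 1" by (simp add: \<omega>_def norm_exp_eq_Re)
  have shifted: "(\<lambda>i. taylor_coeff f (Suc i) * u ^ i) sums (f u / u)" if "norm u < 1" "u \<noteq> 0" for u
  proof -
    have "(\<lambda>i. taylor_coeff f (Suc i) * u ^ Suc i) sums f u"
      using sums_Suc_iff[of "\<lambda>i. taylor_coeff f i * u ^ i"] sums_taylor_coeff[OF holf that(1)] f0
      by simp
    from sums_divide[OF this, of u] show ?thesis using that by (simp add: field_simps)
  qed
  have "(\<lambda>i. \<Sum>j<k. taylor_coeff f (Suc i) * (\<omega> ^ j * z) ^ i)
          sums (\<Sum>j<k. f (\<omega> ^ j * z) / (\<omega> ^ j * z))"
    by (intro sums_sum shifted) (use z norm_\<omega> in \<open>auto simp: norm_mult norm_power\<close>)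
  moreover have "(\<Sum>j<k. taylor_coeff f (Suc i) * (\<omega> ^ j * z) ^ i)
      = (if k dvd i then taylor_coeff f (Suc i) * z ^ i else 0) * of_nat k" for i
  proof -
    have "(\<Sum>j<k. taylor_coeff f (Suc i) * (\<omega> ^ j * z) ^ i)
        = taylor_coeff f (Suc i) * z ^ i * (\<Sum>j<k. (\<omega> ^ i) ^ j)"
      by (simp add: sum_distrib_left power_mult_distrib mult_ac flip: power_mult)
    then show ?thesis unfolding \<omega>_def sum_powers_root_of_unity[OF k] by simp
  qed
  ultimately have "(\<lambda>i. (if k dvd i then taylor_coeff f (Suc i) * z ^ i else 0) * of_nat k)
      sums (\<Sum>j<k. f (\<omega> ^ j * z) / (\<omega> ^ j * z))"
    by simp
  from sums_divide[OF this, of "of_nat k"]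
  have "(\<lambda>i. if k dvd i then taylor_coeff f (Suc i) * z ^ i else 0)
      sums ((\<Sum>j<k. f (\<omega> ^ j * z) / (\<omega> ^ j * z)) / of_nat k)"
    using k by simp
  moreover have "strict_mono (\<lambda>m. m * k)" using k by (auto simp: strict_mono_def)
  moreover have "k dvd i \<Longrightarrow> i \<in> range (\<lambda>m. m * k)" for i
    by (auto elim!: dvdE simp: mult.commute)
  ultimately show ?thesis
    by (subst (asm) sums_mono_reindex[where g = "\<lambda>m. m * k", symmetric])
      (auto simp: ac_simps simp flip: power_mult)
qed

lemma norm_lacunary_taylor_series_le:
  assumes holf: "f holomorphic_on ball 0 1" and f0: "f 0 = 0"
    and bd: "\<forall>z\<in>ball 0 1. norm (f z) \<le> M" and k: "k > 0" and w: "norm w < 1"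
  shows "norm (\<Sum>m. taylor_coeff f (Suc (m * k)) * w ^ m) \<le> M"
proof (cases "w = 0")
  case True
  then show ?thesis using norm_taylor_coeff_le[OF holf bd, of 1] by (simp add: powser_zero)
next
  case False
  define \<omega> where "\<omega> = exp (2 * of_real pi * \<i> / of_nat k)"
  define z where "z = exp (Ln w / of_nat k)"
  have zk: "z ^ k = w" unfolding z_def using k False by (simp flip: exp_of_nat_mult)
  have "norm z = exp (ln (norm w) / real k)" using False by (simp add: z_def norm_exp_eq_Re)
  moreover have "ln (norm w) < 0" using w False by simp
  ultimately have z: "norm z < 1" "z \<noteq> 0" using k by (auto simp: divide_neg_pos z_def)
  have each: "norm (f (\<omega> ^ j * z) / (\<omega> ^ j * z)) \<le> M" for j
  proof -
    have "norm (\<omega> ^ j * z) = norm z" by (simp add: \<omega>_def norm_mult norm_power norm_exp_eq_Re)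
    moreover have "norm (f (\<omega> ^ j * z)) \<le> M * norm (\<omega> ^ j * z)"
      by (rule Schwarz_Lemma_bounded[OF holf f0 bd]) (use calculation z in simp)
    ultimately show ?thesis using z by (simp add: norm_divide divide_le_eq)
  qed
  have "norm (\<Sum>m. taylor_coeff f (Suc (m * k)) * w ^ m)
      = norm (\<Sum>j<k. f (\<omega> ^ j * z) / (\<omega> ^ j * z)) / real k"
    using sums_unique[OF sums_lacunary_taylor_average[OF holf f0 k z], symmetric] zk
    by (simp add: \<omega>_def norm_divide)
  also have "\<dots> \<le> (\<Sum>j<k. norm (f (\<omega> ^ j * z) / (\<omega> ^ j * z))) / real k"
    by (intro divide_right_mono norm_sum) simp
  also have "\<dots> \<le> (\<Sum>j<k. M) / real k"
    by (intro divide_right_mono sum_mono each) simp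
  also have "\<dots> = M" using k by simp
  finally show ?thesis .
qed

lemma norm_taylor_coeff_le_bound_minus_inverse:
  assumes holf: "f holomorphic_on ball 0 1" and f0: "f 0 = 0" and f1: "deriv f 0 = 1"
    and bd: "\<forall>z\<in>ball 0 1. norm (f z) \<le> M" and n: "n \<ge> 2"
  shows "norm (taylor_coeff f n) \<le> M - 1 / M"
proof -
  txt \<open>S w = a_1 + a_n w + a_(2n-1) w^2 + ... is bounded by M, so Schwarz-Pick at the origin
    bounds its derivative a_n.\<close>
  define k where "k = n - 1"
  have k: "k > 0" "Suc (1 * k) = n" using n by (auto simp: k_def)
  define b where "b = (\<lambda>m. taylor_coeff f (Suc (m * k)))"
  define S where "S = (\<lambda>w. \<Sum>m. b m * w ^ m)"
  have M: "M \<ge> 1" using norm_taylor_coeff_le[OF holf bd, of 1] f1 by simp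
  have "summable (\<lambda>m. b m * w ^ m)" if "norm w < 1" for w
  proof (rule summable_comparison_test)
    show "\<exists>N. \<forall>m\<ge>N. norm (b m * w ^ m) \<le> M * norm w ^ m"
      using norm_taylor_coeff_le[OF holf bd]
      by (auto simp: b_def norm_mult norm_power intro!: mult_right_mono)
    show "summable (\<lambda>m. M * norm w ^ m)" using that by simp
  qed
  then have dS: "(S has_field_derivative (\<Sum>m. diffs b m * w ^ m)) (at w)" if "norm w < 1" for w
    unfolding S_def by (rule termdiffs_strong'[of 1]) (use that in auto)
  have "S holomorphic_on ball 0 1"
    using dS by (subst holomorphic_on_open) (auto, metis)
  moreover have "\<forall>w\<in>ball 0 1. norm (S w) \<le> M"
    using norm_lacunary_taylor_series_le[OF holf f0 bd k(1)] by (simp add: S_def b_def)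
  ultimately have "M * norm (deriv S 0) \<le> M\<^sup>2 - (norm (S 0))\<^sup>2"
    using M by (intro Schwarz_Pick_origin_bounded) auto
  moreover have "deriv S 0 = taylor_coeff f n"
    using DERIV_imp_deriv[OF dS[of 0]] k by (simp add: powser_zero diffs_def b_def)
  moreover have "S 0 = 1" using f1 by (simp add: S_def b_def powser_zero)
  ultimately have "M * norm (taylor_coeff f n) \<le> M\<^sup>2 - 1"
    by simp
  then show ?thesis using M by (simp add: field_simps power2_eq_square)
qed

lemma sums_z_deriv_taylor_coeff:
  assumes holf: "f holomorphic_on ball 0 1" and z: "norm z < 1"
  shows "(\<lambda>n. of_nat n * taylor_coeff f n * z ^ n) sums (z * deriv f z)"
proof -
  have "deriv f holomorphic_on ball 0 1" by (rule holomorphic_deriv[OF holf open_ball])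
  from sums_taylor_coeff[OF this z]
  have "(\<lambda>n. of_nat (Suc n) * taylor_coeff f (Suc n) * z ^ n) sums deriv f z"
    by (simp add: taylor_coeff_def funpow_Suc_right del: funpow.simps of_nat_Suc)
  from sums_mult[OF this, of z]
  have "(\<lambda>n. of_nat (Suc n) * taylor_coeff f (Suc n) * z ^ Suc n) sums (z * deriv f z)"
    by (simp add: mult_ac)
  then show ?thesis using sums_Suc_iff[of "\<lambda>n. of_nat n * taylor_coeff f n * z ^ n"] by simp
qed

lemma sums_weighted_geometric_tail:
  fixes r :: real assumes r: "0 \<le> r" "r < 1"
  shows "(\<lambda>i. (\<beta> * real (i + 2) + \<alpha>) * r ^ (i + 2))
           sums (\<beta> * (r / (1 - r)\<^sup>2 - r) + \<alpha> * (r\<^sup>2 / (1 - r)))"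
proof -
  have "(\<lambda>n. real (Suc n) * r ^ n) sums (1 / (1 - r)\<^sup>2)"
    using geometric_deriv_sums[of r] r by simp
  from sums_mult[OF this, of r] have "(\<lambda>n. real (Suc n) * r ^ Suc n) sums (r / (1 - r)\<^sup>2)"
    by (simp add: mult_ac)
  then have "(\<lambda>n. real n * r ^ n) sums (r / (1 - r)\<^sup>2)"
    using sums_Suc_iff[of "\<lambda>n. real n * r ^ n"] by simp
  then have "(\<lambda>n. \<beta> * (real n * r ^ n) + \<alpha> * r ^ n) sums (\<beta> * (r / (1 - r)\<^sup>2) + \<alpha> * (1 / (1 - r)))"
    using geometric_sums[of r] r by (intro sums_add sums_mult) auto
  then have "(\<lambda>i. (\<beta> * real (i + 2) + \<alpha>) * r ^ (i + 2))
      sums (\<beta> * (r / (1 - r)\<^sup>2) + \<alpha> * (1 / (1 - r)) - (\<alpha> + (\<beta> + \<alpha>) * r))"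
    by (subst sums_iff_shift) (simp_all add: algebra_simps numeral_2_eq_2)
  moreover have "\<beta> * (r / (1 - r)\<^sup>2) + \<alpha> * (1 / (1 - r)) - (\<alpha> + (\<beta> + \<alpha>) * r)
      = \<beta> * (r / (1 - r)\<^sup>2 - r) + \<alpha> * (r\<^sup>2 / (1 - r))"
    using r by (simp add: field_simps power2_eq_square)
  ultimately show ?thesis by simp
qed

lemma norm_weighted_taylor_remainder_le:
  fixes \<alpha> \<beta> :: real
  assumes holf: "f holomorphic_on ball 0 1" and f0: "f 0 = 0" and f1: "deriv f 0 = 1"
    and bd: "\<forall>z\<in>ball 0 1. norm (f z) \<le> M" and z: "norm z < 1"
    and \<beta>: "\<beta> \<ge> 0" and \<alpha>: "2 * \<beta> + \<alpha> \<ge> 0"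
  shows "norm (of_real \<beta> * (z * deriv f z) + of_real \<alpha> * f z - of_real (\<alpha> + \<beta>) * z)
          \<le> (M - 1 / M) * (\<beta> * (norm z / (1 - norm z)\<^sup>2 - norm z) + \<alpha> * ((norm z)\<^sup>2 / (1 - norm z)))"
proof -
  define c where "c = (\<lambda>n. of_real (\<beta> * real n + \<alpha>) * taylor_coeff f n * z ^ n)"
  have "c sums (of_real \<beta> * (z * deriv f z) + of_real \<alpha> * f z)"
    using sums_add[OF sums_mult[OF sums_z_deriv_taylor_coeff[OF holf z], of "of_real \<beta>"]
        sums_mult[OF sums_taylor_coeff[OF holf z], of "of_real \<alpha>"]]
    by (simp add: c_def algebra_simps)
  then have "(\<lambda>i. c (i + 2))
      sums (of_real \<beta> * (z * deriv f z) + of_real \<alpha> * f z - of_real (\<alpha> + \<beta>) * z)"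
    by (subst sums_iff_shift) (simp add: c_def f0 f1 numeral_2_eq_2 algebra_simps)
  moreover have "(\<lambda>i. (M - 1 / M) * ((\<beta> * real (i + 2) + \<alpha>) * norm z ^ (i + 2)))
      sums ((M - 1 / M) * (\<beta> * (norm z / (1 - norm z)\<^sup>2 - norm z) + \<alpha> * ((norm z)\<^sup>2 / (1 - norm z))))"
    using z by (intro sums_mult sums_weighted_geometric_tail) auto
  moreover have "norm (c (i + 2)) \<le> (M - 1 / M) * ((\<beta> * real (i + 2) + \<alpha>) * norm z ^ (i + 2))" for i
  proof -
    have w: "\<beta> * real (i + 2) + \<alpha> \<ge> 0"
      using \<alpha> \<beta> mult_left_mono[of 2 "real (i + 2)" \<beta>] by simp
    then have "norm (c (i + 2)) = (\<beta> * real (i + 2) + \<alpha>) * norm (taylor_coeff f (i + 2)) * norm z ^ (i + 2)"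
      by (simp only: c_def norm_mult norm_power norm_of_real abs_of_nonneg)
    also have "\<dots> \<le> (\<beta> * real (i + 2) + \<alpha>) * (M - 1 / M) * norm z ^ (i + 2)"
      using w norm_taylor_coeff_le_bound_minus_inverse[OF holf f0 f1 bd, of "i + 2"]
      by (intro mult_right_mono mult_left_mono) auto
    finally show ?thesis by (simp only: mult_ac)
  qed
  ultimately show ?thesis by (rule norm_sums_le)
qed

lemma taylor_remainder_bounds:
  assumes "f holomorphic_on ball 0 1" and "f 0 = 0" and "deriv f 0 = 1"
    and "\<forall>z\<in>ball 0 1. norm (f z) \<le> M" and "norm z < 1"
  defines "K \<equiv> M - 1 / M" and "P \<equiv> norm z / (1 - norm z)\<^sup>2 - norm z"
    and "Q \<equiv> (norm z)\<^sup>2 / (1 - norm z)"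
  shows "norm (z * deriv f z - z) \<le> K * P" and "norm (f z - z) \<le> K * Q"
    and "norm (z * deriv f z + f z - 2 * z) \<le> K * (P + Q)"
    and "norm (z * deriv f z - f z) \<le> K * (P - Q)"
  using norm_weighted_taylor_remainder_le[OF assms(1-5), of 1 0]
    norm_weighted_taylor_remainder_le[OF assms(1-5), of 0 1]
    norm_weighted_taylor_remainder_le[OF assms(1-5), of 1 1]
    norm_weighted_taylor_remainder_le[OF assms(1-5), of 1 "-1"]
  by (simp_all add: K_def P_def Q_def)

section \<open>Maps with Re F_z > |F_zbar|\<close>

lemma
  assumes "(F has_derivative (\<lambda>h. A * h + B * cnj h)) (at z)"
  shows wirt_z_eq: "wirt_z F z = A" and wirt_zbar_eq: "wirt_zbar F z = B"
    and jacobian_eq: "jacobian F z = (norm A)\<^sup>2 - (norm B)\<^sup>2"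
proof -
  have "frechet_derivative F (at z) = (\<lambda>h. A * h + B * cnj h)"
    using assms by (rule frechet_derivative_at[symmetric])
  then show "wirt_z F z = A" and "wirt_zbar F z = B"
    by (simp_all add: wirt_z_def wirt_zbar_def algebra_simps)
  then show "jacobian F z = (norm A)\<^sup>2 - (norm B)\<^sup>2"
    by (simp add: jacobian_def)
qed

lemma has_derivative_cnj_mult_plus:
  assumes "(G has_field_derivative G') (at z)" and "(H has_field_derivative H') (at z)"
  shows "((\<lambda>w. cnj w * G w + H w) has_derivative (\<lambda>h. (cnj z * G' + H') * h + G z * cnj h)) (at z)"
proof -
  have "((\<lambda>w. cnj w * G w + H w) has_derivative (\<lambda>h. cnj z * (G' * h) + cnj h * G z + H' * h)) (at z)"
    using assms[THEN has_field_derivative_imp_has_derivative]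
    by (intro has_derivative_add has_derivative_mult has_derivative_cnj has_derivative_ident)
  then show ?thesis by (simp add: algebra_simps)
qed

lemma has_real_derivative_Re_cnj_mult_along_line:
  assumes "(F has_derivative (\<lambda>h. A * h + B * cnj h)) (at (z + of_real t * L))"
  shows "((\<lambda>t. Re (cnj L * F (z + of_real t * L))) has_real_derivative
           (norm L)\<^sup>2 * Re A + Re (cnj L * cnj L * B)) (at t)"
proof -
  have "((\<lambda>t. z + of_real t * L) has_derivative (\<lambda>h. of_real h * L)) (at t)"
    by (auto intro!: derivative_eq_intros)
  from has_derivative_compose[OF this assms]
  have "((\<lambda>t. Re (cnj L * F (z + of_real t * L))) has_derivative
      (\<lambda>h. Re (cnj L * (A * (of_real h * L) + B * cnj (of_real h * L))))) (at t)"
    by (intro has_derivative_Re has_derivative_mult_right)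
  moreover have "(\<lambda>h. Re (cnj L * (A * (of_real h * L) + B * cnj (of_real h * L))))
      = (*) ((norm L)\<^sup>2 * Re A + Re (cnj L * cnj L * B))"
  proof
    fix h :: real
    have "cnj L * (A * (of_real h * L) + B * cnj (of_real h * L))
        = of_real h * (A * (L * cnj L) + cnj L * cnj L * B)"
      by (simp add: algebra_simps)
    then show "Re (cnj L * (A * (of_real h * L) + B * cnj (of_real h * L)))
        = ((norm L)\<^sup>2 * Re A + Re (cnj L * cnj L * B)) * h"
      by (simp add: mult.commute flip: complex_norm_square)
  qed
  ultimately show ?thesis by (simp only: has_field_derivative_def)
qed

lemma inj_on_of_norm_wirt_zbar_less_Re:
  assumes S: "convex S"
    and deriv: "\<And>z. z \<in> S \<Longrightarrow> (F has_derivative (\<lambda>h. A z * h + B z * cnj h)) (at z)"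
    and dominant: "\<And>z. z \<in> S \<Longrightarrow> norm (B z) < Re (A z)"
  shows "inj_on F S"
proof (rule inj_onI, rule ccontr)
  fix z1 z2 assume z1: "z1 \<in> S" and z2: "z2 \<in> S" and eq: "F z1 = F z2" and ne: "z1 \<noteq> z2"
  define L where "L = z2 - z1"
  define \<phi> where "\<phi> = (\<lambda>t. Re (cnj L * F (z1 + of_real t * L)))"
  have "\<exists>y. (\<phi> has_real_derivative y) (at t) \<and> y > 0" if t: "0 \<le> t" "t \<le> 1" for t
  proof -
    define w where "w = z1 + of_real t * L"
    have "(1 - t) *\<^sub>R z1 + t *\<^sub>R z2 \<in> S"
      using convexD[OF S z1 z2, of "1 - t" t] t by simp
    then have w: "w \<in> S"
      by (simp add: w_def L_def scaleR_conv_of_real algebra_simps)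
    have "- Re (cnj L * cnj L * B w) \<le> (norm L)\<^sup>2 * norm (B w)"
      using abs_Re_le_cmod[of "cnj L * cnj L * B w"] by (simp add: norm_mult power2_eq_square)
    moreover have "(norm L)\<^sup>2 * norm (B w) < (norm L)\<^sup>2 * Re (A w)"
      using dominant[OF w] ne by (simp add: L_def)
    ultimately have "(norm L)\<^sup>2 * Re (A w) + Re (cnj L * cnj L * B w) > 0" by linarith
    with has_real_derivative_Re_cnj_mult_along_line[OF deriv[OF w, unfolded w_def]]
    show ?thesis unfolding \<phi>_def w_def by blast
  qed
  then have "\<phi> 0 < \<phi> 1" by (rule DERIV_pos_imp_increasing[OF zero_less_one])
  moreover have "\<phi> 0 = \<phi> 1" using eq by (simp add: \<phi>_def L_def)
  ultimately show False by simp
qed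

lemma Re_divide_pos_of_norm_diff_less:
  fixes N F :: complex
  assumes "norm (N - F) < norm (N + F)"
  shows "Re (N / F) > 0"
proof -
  have "(norm (N - F))\<^sup>2 < (norm (N + F))\<^sup>2" using assms by (intro power_strict_mono) auto
  then have "Re N * Re F + Im N * Im F > 0" unfolding cmod_power2 by (simp add: power2_eq_square algebra_simps)
  moreover have "F \<noteq> 0" using assms by auto
  ultimately show ?thesis by (simp add: Re_divide')
qed

lemma sense_preserving_on_of_norm_wirt_zbar_less_Re:
  assumes deriv: "\<And>z. z \<in> S \<Longrightarrow> (F has_derivative (\<lambda>h. A z * h + B z * cnj h)) (at z)"
    and dominant: "\<And>z. z \<in> S \<Longrightarrow> norm (B z) < Re (A z)"
  shows "sense_preserving_on F S"
  unfolding sense_preserving_on_def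
proof
  fix z assume z: "z \<in> S"
  have "norm (B z) < norm (A z)"
    using dominant[OF z] complex_Re_le_cmod[of "A z"] by linarith
  then have "(norm (B z))\<^sup>2 < (norm (A z))\<^sup>2"
    by (intro power_strict_mono) auto
  then show "F differentiable (at z) \<and> jacobian F z > 0"
    using deriv[OF z] jacobian_eq[OF deriv[OF z]] by (auto simp: differentiable_def)
qed

section \<open>The map cnj z G + H\<close>

lemma rho3_eq_pos_below_root:
  assumes "\<rho> \<in> {0<..<1}" and "\<forall>r\<in>{0<..<1}. rho3_eq M1 M2 r = 0 \<longrightarrow> r = \<rho>"
    and "0 \<le> r" "r < \<rho>"
  shows "rho3_eq M1 M2 r > 0"
proof (rule ccontr)
  assume "\<not> ?thesis"
  moreover have "continuous_on {0..r} (rho3_eq M1 M2)"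
    unfolding rho3_eq_def using assms by (intro continuous_intros) auto
  moreover have at0: "rho3_eq M1 M2 0 = 1" by (simp add: rho3_eq_def)
  ultimately obtain x where x: "0 \<le> x" "x \<le> r" "rho3_eq M1 M2 x = 0"
    using IVT2'[of "rho3_eq M1 M2" r 0 0] assms(3) by auto
  then have "x \<noteq> 0" using at0 by auto
  then show False using assms x by auto
qed

text \<open>r / (1 - r)^2 - r and r^2 / (1 - r) are the sums of n r^n and of r^n over n \<ge> 2.\<close>

lemma rho3_eq_alt:
  fixes r :: real assumes r: "0 < r" "r < 1"
  shows "rho3_eq M1 M2 r = 1 - (M2 - 1 / M2) * ((r / (1 - r)\<^sup>2 - r) / r)
          - (M1 - 1 / M1) * ((r / (1 - r)\<^sup>2 - r) + r\<^sup>2 / (1 - r)) - 2 * r"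
proof -
  have "1 - r \<noteq> 0" "(1 - r)\<^sup>2 \<noteq> 0" using r by auto
  then have "(r / (1 - r)\<^sup>2 - r) / r = (2 * r - r\<^sup>2) / (1 - r)\<^sup>2"
    and "(r / (1 - r)\<^sup>2 - r) + r\<^sup>2 / (1 - r) = (3 - 2 * r) * r\<^sup>2 / (1 - r)\<^sup>2"
    using r by (simp_all add: field_simps) algebra+
  then show ?thesis by (simp add: rho3_eq_def)
qed

lemma norm_less_Re_cnj_mult_deriv_add_deriv:
  fixes G H :: "complex \<Rightarrow> complex" and M1 M2 :: real
  assumes hG: "G holomorphic_on ball 0 1" and hH: "H holomorphic_on ball 0 1"
    and G0: "G 0 = 0" and H0: "H 0 = 0" and G1: "deriv G 0 = 1" and H1: "deriv H 0 = 1"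
    and bG: "\<forall>z\<in>ball 0 1. norm (G z) \<le> M1" and bH: "\<forall>z\<in>ball 0 1. norm (H z) \<le> M2"
    and z: "norm z < 1" and pos: "rho3_eq M1 M2 (norm z) > 0"
  shows "norm (G z) < Re (cnj z * deriv G z + deriv H z)"
proof (cases "z = 0")
  case True
  then show ?thesis using G0 H1 by simp
next
  case False
  define r where "r = norm z"
  define A where "A = M1 - 1 / M1"
  define B where "B = M2 - 1 / M2"
  define P where "P = r / (1 - r)\<^sup>2 - r"
  define Q where "Q = r\<^sup>2 / (1 - r)"
  note G_bounds = taylor_remainder_bounds[OF hG G0 G1 bG z, folded r_def A_def, folded P_def Q_def]
  note H_bounds = taylor_remainder_bounds[OF hH H0 H1 bH z, folded r_def B_def, folded P_def Q_def]
  have r: "0 < r" "r < 1" using z False by (auto simp: r_def)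
  have Re_zbar_G': "Re (cnj z * deriv G z) \<ge> - (r + A * P)"
    using G_bounds(1) abs_Re_le_cmod[of "cnj z * deriv G z"] norm_triangle_ineq2[of "z * deriv G z" z]
    by (simp add: norm_mult r_def)
  have norm_G: "norm (G z) \<le> r + A * Q"
    using G_bounds(2) norm_triangle_ineq2[of "G z" z] by (simp add: r_def)
  have "norm (z * deriv H z - z) = r * norm (deriv H z - 1)"
    unfolding r_def by (simp flip: norm_mult add: right_diff_distrib)
  then have "norm (deriv H z - 1) \<le> B * P / r"
    using H_bounds(1) r by (simp add: field_simps)
  then have Re_H': "Re (deriv H z) \<ge> 1 - B * P / r"
    using abs_Re_le_cmod[of "deriv H z - 1"] by simp
  have "rho3_eq M1 M2 r = 1 - B * P / r - A * (P + Q) - 2 * r"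
    using rho3_eq_alt[OF r] by (simp add: A_def B_def P_def Q_def)
  then show ?thesis
    using pos Re_zbar_G' norm_G Re_H' unfolding r_def[symmetric] by (simp add: algebra_simps)
qed

lemma starlike_numerator_bounds:
  fixes G H :: "complex \<Rightarrow> complex" and M1 M2 :: real
  assumes hG: "G holomorphic_on ball 0 1" and hH: "H holomorphic_on ball 0 1"
    and G0: "G 0 = 0" and H0: "H 0 = 0" and G1: "deriv G 0 = 1" and H1: "deriv H 0 = 1"
    and bG: "\<forall>z\<in>ball 0 1. norm (G z) \<le> M1" and bH: "\<forall>z\<in>ball 0 1. norm (H z) \<le> M2"
    and z: "norm z < 1"
  defines "r \<equiv> norm z" and "A \<equiv> M1 - 1 / M1" and "B \<equiv> M2 - 1 / M2"
    and "P \<equiv> norm z / (1 - norm z)\<^sup>2 - norm z" and "Q \<equiv> (norm z)\<^sup>2 / (1 - norm z)"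
    and "N \<equiv> z * (cnj z * deriv G z + deriv H z) - cnj z * G z" and "F \<equiv> cnj z * G z + H z"
  shows "norm (N + F) \<ge> 2 * r - r\<^sup>2 - r * (A * P) - B * (P + Q)"
    and "norm (N - F) \<le> r\<^sup>2 + r * (A * P) + B * (P - Q) + 2 * (r * (A * Q))"
proof -
  note G_bounds = taylor_remainder_bounds[OF hG G0 G1 bG z, folded A_def P_def Q_def]
  note H_bounds = taylor_remainder_bounds[OF hH H0 H1 bH z, folded B_def P_def Q_def]
  define u1 where "u1 = z * deriv G z - z"
  define u2 where "u2 = G z - z"
  define v1 where "v1 = z * deriv H z + H z - 2 * z"
  define v2 where "v2 = z * deriv H z - H z"
  have u1: "norm (cnj z * u1) \<le> r * (A * P)"
    using G_bounds(1) by (simp add: norm_mult r_def u1_def mult_left_mono)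
  have u2: "norm (2 * (cnj z * u2)) \<le> 2 * (r * (A * Q))"
    using G_bounds(2) by (simp add: norm_mult r_def u2_def mult_left_mono)
  have zz: "cnj z * z = of_real (r\<^sup>2)"
    using complex_norm_square[of z] by (simp add: r_def mult.commute)
  have sum_eq: "N + F = (of_real (r\<^sup>2) + 2 * z) + (cnj z * u1 + v1)"
    unfolding N_def F_def zz[symmetric] u1_def v1_def by (simp add: algebra_simps)
  have "norm (of_real (r\<^sup>2) + 2 * z) \<ge> 2 * r - r\<^sup>2"
    using norm_diff_ineq[of "2 * z" "of_real (r\<^sup>2)"] by (simp add: norm_mult norm_power r_def add.commute)
  moreover have "norm (cnj z * u1 + v1) \<le> r * (A * P) + B * (P + Q)"
    using norm_triangle_ineq[of "cnj z * u1" v1] u1 H_bounds(3) by (simp add: v1_def)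
  ultimately show "norm (N + F) \<ge> 2 * r - r\<^sup>2 - r * (A * P) - B * (P + Q)"
    unfolding sum_eq using norm_diff_ineq[of "of_real (r\<^sup>2) + 2 * z" "cnj z * u1 + v1"] by linarith
  have diff_eq: "N - F = - of_real (r\<^sup>2) + (cnj z * u1 + v2 - 2 * (cnj z * u2))"
    unfolding N_def F_def zz[symmetric] u1_def u2_def v2_def by (simp add: algebra_simps)
  have "norm (- of_real (r\<^sup>2) :: complex) = r\<^sup>2" by (simp add: norm_power)
  moreover have "norm (cnj z * u1 + v2 - 2 * (cnj z * u2)) \<le> r * (A * P) + B * (P - Q) + 2 * (r * (A * Q))"
    using norm_triangle_ineq[of "cnj z * u1" v2] norm_triangle_ineq4[of "cnj z * u1 + v2" "2 * (cnj z * u2)"]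
      u1 u2 H_bounds(4) by (simp add: v2_def)
  ultimately show "norm (N - F) \<le> r\<^sup>2 + r * (A * P) + B * (P - Q) + 2 * (r * (A * Q))"
    unfolding diff_eq using norm_triangle_ineq[of "- of_real (r\<^sup>2)" "cnj z * u1 + v2 - 2 * (cnj z * u2)"] by linarith
qed

lemma starlike_norm_estimate:
  fixes G H :: "complex \<Rightarrow> complex" and M1 M2 :: real
  assumes hG: "G holomorphic_on ball 0 1" and hH: "H holomorphic_on ball 0 1"
    and G0: "G 0 = 0" and H0: "H 0 = 0" and G1: "deriv G 0 = 1" and H1: "deriv H 0 = 1"
    and bG: "\<forall>z\<in>ball 0 1. norm (G z) \<le> M1" and bH: "\<forall>z\<in>ball 0 1. norm (H z) \<le> M2"
    and z: "norm z < 1" "z \<noteq> 0" and pos: "rho3_eq M1 M2 (norm z) > 0"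
  defines "N \<equiv> z * (cnj z * deriv G z + deriv H z) - cnj z * G z"
    and "F \<equiv> cnj z * G z + H z"
  shows "norm (N - F) < norm (N + F)"
proof -
  define r where "r = norm z"
  define A where "A = M1 - 1 / M1"
  define B where "B = M2 - 1 / M2"
  define P where "P = r / (1 - r)\<^sup>2 - r"
  define Q where "Q = r\<^sup>2 / (1 - r)"
  have r: "0 < r" "r < 1" using z by (auto simp: r_def)
  note bounds = starlike_numerator_bounds[OF hG hH G0 H0 G1 H1 bG bH z(1),
      folded r_def A_def B_def, folded P_def Q_def N_def F_def]
  have "rho3_eq M1 M2 r = 1 - B * P / r - A * (P + Q) - 2 * r"
    using rho3_eq_alt[OF r] by (simp add: A_def B_def P_def Q_def)
  then have "2 * r * rho3_eq M1 M2 r = 2 * r - 2 * (B * P) - 2 * (r * (A * P)) - 2 * (r * (A * Q)) - 4 * r\<^sup>2"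
    using r by (simp add: field_simps power2_eq_square)
  moreover have "2 * r * rho3_eq M1 M2 r > 0" using pos r by (simp add: r_def)
  moreover have "B * (P + Q) = B * P + B * Q" "B * (P - Q) = B * P - B * Q"
    by (simp_all add: algebra_simps)
  ultimately show ?thesis using bounds by (smt (verit) zero_le_power2)
qed

theorem theorem2p4:
  fixes G H :: "complex \<Rightarrow> complex" and M1 M2 \<rho> :: real
  assumes "M1 > 0" and "M2 > 0"
    and "G holomorphic_on ball 0 1" and "H holomorphic_on ball 0 1"
    and "\<exists>z\<in>ball 0 1. G z \<noteq> 0"
    and "G 0 = 0" and "H 0 = 0" and "deriv G 0 = 1" and "deriv H 0 = 1"
    and "\<forall>z\<in>ball 0 1. cmod (G z) \<le> M1" and "\<forall>z\<in>ball 0 1. cmod (H z) \<le> M2"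
    and "\<rho> \<in> {0<..<1}" and "rho3_eq M1 M2 \<rho> = 0"
    and "\<forall>r\<in>{0<..<1}. rho3_eq M1 M2 r = 0 \<longrightarrow> r = \<rho>"
  shows "sense_preserving_on (\<lambda>z. cnj z * G z + H z) (ball 0 \<rho>)
       \<and> inj_on (\<lambda>z. cnj z * G z + H z) (ball 0 \<rho>)
       \<and> fully_starlike_in (\<lambda>z. cnj z * G z + H z) \<rho>"
proof -
  txt \<open>M1 > 0, M2 > 0 and G \<noteq> 0 follow from the normalisation, and of rho3_eq M1 M2 \<rho> = 0
    only the absence of roots in (0, \<rho>) is used.\<close>
  note normalized = assms(3,4,6-11)
  define F where "F = (\<lambda>z. cnj z * G z + H z)"
  have in_disc: "norm z < 1" and pos: "rho3_eq M1 M2 (norm z) > 0" if "z \<in> ball 0 \<rho>" for z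
    using that assms(12) rho3_eq_pos_below_root[OF assms(12,14)] by auto
  have deriv: "(F has_derivative (\<lambda>h. (cnj z * deriv G z + deriv H z) * h + G z * cnj h)) (at z)"
    if "z \<in> ball 0 \<rho>" for z
    unfolding F_def using in_disc[OF that] assms(3,4)
    by (intro has_derivative_cnj_mult_plus holomorphic_derivI[of _ "ball 0 1"]) auto
  have dominant: "norm (G z) < Re (cnj z * deriv G z + deriv H z)" if "z \<in> ball 0 \<rho>" for z
    using norm_less_Re_cnj_mult_deriv_add_deriv[OF normalized in_disc[OF that] pos[OF that]] .
  have sense_preserving: "sense_preserving_on F (ball 0 \<rho>)"
    using sense_preserving_on_of_norm_wirt_zbar_less_Re[OF deriv dominant] .
  have starlike: "norm ((z * wirt_z F z - cnj z * wirt_zbar F z) - F z)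
      < norm ((z * wirt_z F z - cnj z * wirt_zbar F z) + F z)" if "z \<in> ball 0 \<rho>" "z \<noteq> 0" for z
    using starlike_norm_estimate[OF normalized in_disc[OF that(1)] that(2) pos[OF that(1)]]
    unfolding wirt_z_eq[OF deriv[OF that(1)]] wirt_zbar_eq[OF deriv[OF that(1)]]
    unfolding F_def .
  have "inj_on F (ball 0 \<rho>)"
    by (rule inj_on_of_norm_wirt_zbar_less_Re[OF convex_ball deriv dominant])
  moreover have "fully_starlike_in F \<rho>"
    unfolding fully_starlike_in_def
    using sense_preserving starlike Re_divide_pos_of_norm_diff_less assms(7)
    by (fastforce simp: F_def)
  ultimately show ?thesis
    using sense_preserving by (simp add: F_def)
qed

end
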